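(* Let $\mathcal{X},\mathcal{Y},\mathcal{U},\mathcal{Z}$ be finite sets, let $(X,Y)\in\mathcal{X}\times\mathcal{Y}$ have a joint distribution $P_{X,Y}$ of full support on $\mathcal{X}\times\mathcal{Y}$, and let $f:\mathcal{X}\times\mathcal{Y}\to\mathcal{U}$, $g:\mathcal{Y}\to\mathcal{Z}$ be deterministic. Define $j:\mathcal{X}\times\mathcal{Z}\to\mathcal{U}^*$ by $j(x,z)=(f(x,y'))_{y'\in g^{-1}(z)}$ (the word listing the values $f(x,y')$ over $y'\in g^{-1}(z)$ in a fixed order). Then the optimal zero-error rate is $$R^*=H\big(j(X,g(Y))\,\big|\,g(Y)\big).$$
   Context: $\mathcal{U}^*$ denotes the set of finite words over $\mathcal{U}$, and $g^{-1}(z)=\{y\in\mathcal{Y}:g(y)=z\}$. Setting: $(X^n,Y^n)$ denotes $n$ i.i.d. copies of $(X,Y)$. An encoder observes $X^n$ and $(g(Y_t))_{t\le n}$; a decoder observes $Y^n$ and must recover $(f(X_t,Y_t))_{t\le n}$. An $(n,R_n)$-zero-error source code is a pair $\phi_e:\mathcal{X}^n\times\mathcal{Z}^n\to\{0,1\}^*$, $\phi_d:\mathcal{Y}^n\times\{0,1\}^*\to\mathcal{U}^n$ such that $\phi_e(\mathcal{X}^n\times\mathcal{Z}^n)$ is prefix-free, $R_n=\frac1n\mathbb{E}[l(\phi_e(X^n,(g(Y_t))_{t\le n}))]$ ($l$ = length of a binary word), and for all $(x^n,y^n)\in\operatorname{supp}P^n_{X,Y}$, $\phi_d(y^n,\phi_e(x^n,(g(y_t))_{t\le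 n}))=(f(x_t,y_t))_{t\le n}$. A rate $R$ is achievable if some sequence of $(n,R_n)$-zero-error codes has $\lim_n R_n=R$; $R^*$ is the infimum of achievable rates. *)

theory Defs
  imports Complex_Main "HOL-Library.Sublist"
begin

definition prod_pmf_n :: "('x \<Rightarrow> 'y \<Rightarrow> real) \<Rightarrow> 'x list \<Rightarrow> 'y list \<Rightarrow> real" where
  "prod_pmf_n P xs ys = (\<Prod>t<length xs. P (xs ! t) (ys ! t))"

definition prefix_free :: "bool list set \<Rightarrow> bool" where
  "prefix_free C \<longleftrightarrow> (\<forall>a\<in>C. \<forall>b\<in>C. a \<noteq> b \<longrightarrow> \<not> prefix a b)"

text \<open>Since P has full support, the
correctness condition is required for all sequences of length n.\<close>
definition zero_error_code ::
  "('x \<Rightarrow> 'y \<Rightarrow> 'u) \<Rightarrow> ('y \<Rightarrow> 'z) \<Rightarrow> nat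
   \<Rightarrow> ('x list \<Rightarrow> 'z list \<Rightarrow> bool list) \<Rightarrow> ('y list \<Rightarrow> bool list \<Rightarrow> 'u list) \<Rightarrow> bool" where
  "zero_error_code f g n enc dec \<longleftrightarrow>
     prefix_free {enc xs zs | xs zs. length xs = n \<and> length zs = n} \<and>
     (\<forall>xs ys. length xs = n \<longrightarrow> length ys = n \<longrightarrow>
        dec ys (enc xs (map g ys)) = map2 f xs ys)"

definition code_rate ::
  "('x \<Rightarrow> 'y \<Rightarrow> real) \<Rightarrow> ('y \<Rightarrow> 'z) \<Rightarrow> nat \<Rightarrow> ('x list \<Rightarrow> 'z list \<Rightarrow> bool list) \<Rightarrow> real" where
  "code_rate P g n enc =
     (1 / real n) * (\<Sum>(xs, ys) \<in> {xs. length xs = n} \<times> {ys. length ys = n}.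
        prod_pmf_n P xs ys * real (length (enc xs (map g ys))))"

definition achievable_rate ::
  "('x \<Rightarrow> 'y \<Rightarrow> real) \<Rightarrow> ('x \<Rightarrow> 'y \<Rightarrow> 'u) \<Rightarrow> ('y \<Rightarrow> 'z) \<Rightarrow> real \<Rightarrow> bool" where
  "achievable_rate P f g R \<longleftrightarrow>
     (\<exists>enc dec. (\<forall>n\<ge>1. zero_error_code f g n (enc n) (dec n)) \<and>
        (\<lambda>n. code_rate P g n (enc n)) \<longlonglongrightarrow> R)"

definition optimal_rate ::
  "('x \<Rightarrow> 'y \<Rightarrow> real) \<Rightarrow> ('x \<Rightarrow> 'y \<Rightarrow> 'u) \<Rightarrow> ('y \<Rightarrow> 'z) \<Rightarrow> real" where
  "optimal_rate P f g = Inf {R. achievable_rate P f g R}"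

text \<open>j(x,z) = (f(x,y'))_{y' in g^{-1}(z)}, listed in the fixed order given by
an enumeration ys0 of the finite set Y.\<close>
definition jfun :: "'y list \<Rightarrow> ('x \<Rightarrow> 'y \<Rightarrow> 'u) \<Rightarrow> ('y \<Rightarrow> 'z) \<Rightarrow> 'x \<Rightarrow> 'z \<Rightarrow> 'u list" where
  "jfun ys0 f g x z = map (f x) (filter (\<lambda>y'. g y' = z) ys0)"

definition cond_entropy ::
  "('x::finite \<Rightarrow> 'y::finite \<Rightarrow> real) \<Rightarrow> ('x \<Rightarrow> 'y \<Rightarrow> 'a) \<Rightarrow> ('x \<Rightarrow> 'y \<Rightarrow> 'b) \<Rightarrow> real" where
  "cond_entropy P A B =
     (let pAB = (\<lambda>a b. \<Sum>(x, y) \<in> {(x, y). A x y = a \<and> B x y = b}. P x y);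
          pB = (\<lambda>b. \<Sum>(x, y) \<in> {(x, y). B x y = b}. P x y)
      in - (\<Sum>(a, b) \<in> (\<lambda>(x, y). (A x y, B x y)) ` UNIV.
              pAB a b * log 2 (pAB a b / pB b)))"

end

(*
  Write Z = g(Y) and J = j(X, Z).  Two source blocks x, x' seen with the same side information z
  may share a codeword only if their j-sequences agree: otherwise some y with g(y) = z separates
  f(x, y) from f(x', y), and the decoder, who knows y, would err on one of them.  So for each z
  the code is a prefix code separating j-sequences, and the Kraft and Gibbs inequalities bound
  its expected length from below by H(J^n | Z^n) = n H(J | Z).  Conversely, the j-sequence of
  rank r among those compatible with z, ordered by decreasing conditional probability, has
  conditional probability at most 1/r; sending r in binary behind an O(log n)-bit header that
  announces its length costs n H(J | Z) + O(log n) bits on average.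
*)

theory Submission
  imports Defs "HOL-Library.Log_Nat"
begin

section \<open>Sums over blocks of letters\<close>

abbreviation blocks :: "nat \<Rightarrow> ('x list \<times> 'y list) set" where
  "blocks n \<equiv> {xs. length xs = n} \<times> {ys. length ys = n}"

lemma finite_lists_length_UNIV [simp]: "finite {xs :: 'a::finite list. length xs = n}"
  using finite_lists_length_eq[of "UNIV :: 'a set" n] by simp

lemma finite_blocks [simp]: "finite (blocks n :: ('x::finite list \<times> 'y::finite list) set)"
  by (simp add: finite_cartesian_product)

lemma card_lists_length_UNIV: "card {xs :: 'a::finite list. length xs = n} = card (UNIV :: 'a set) ^ n"
  using card_lists_length_eq[of "UNIV :: 'a set" n] by simp

lemma sum_lists_length_Suc:
  fixes F :: "'a::finite list \<Rightarrow> 'b::comm_monoid_add"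
  shows "(\<Sum>xs | length xs = Suc n. F xs) = (\<Sum>x\<in>UNIV. \<Sum>xs | length xs = n. F (x # xs))"
proof -
  have lists_Suc: "{xs. length xs = Suc n} = case_prod Cons ` (UNIV \<times> {xs. length xs = n})"
    by (auto simp: length_Suc_conv)
  have "inj_on (case_prod Cons) (UNIV \<times> {xs :: 'a list. length xs = n})"
    by (auto intro: inj_onI)
  then have "(\<Sum>xs | length xs = Suc n. F xs) = sum (F \<circ> case_prod Cons) (UNIV \<times> {xs. length xs = n})"
    unfolding lists_Suc by (rule sum.reindex)
  then show ?thesis
    by (simp add: sum.cartesian_product comp_def split_def)
qed

lemma sum_lists_length_prod:
  fixes F :: "nat \<Rightarrow> 'a::finite \<Rightarrow> 'b::comm_semiring_1"
  shows "(\<Sum>xs | length xs = n. \<Prod>t<n. F t (xs ! t)) = (\<Prod>t<n. \<Sum>x\<in>UNIV. F t x)"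
proof (induction n arbitrary: F)
  case 0
  show ?case
    by simp
next
  case (Suc n)
  have "(\<Sum>xs | length xs = Suc n. \<Prod>t<Suc n. F t (xs ! t))
      = (\<Sum>x\<in>UNIV. F 0 x * (\<Sum>xs | length xs = n. \<Prod>t<n. F (Suc t) (xs ! t)))"
    unfolding sum_lists_length_Suc prod.lessThan_Suc_shift by (simp add: sum_distrib_left)
  also have "\<dots> = (\<Prod>t<Suc n. \<Sum>x\<in>UNIV. F t x)"
    unfolding Suc.IH[of "\<lambda>t. F (Suc t)"] prod.lessThan_Suc_shift by (simp add: sum_distrib_right)
  finally show ?case .
qed

lemma sum_blocks_prod:
  fixes F :: "nat \<Rightarrow> 'x::finite \<Rightarrow> 'y::finite \<Rightarrow> 'a::comm_semiring_1"
  shows "(\<Sum>(xs, ys)\<in>blocks n. \<Prod>t<n. F t (xs ! t) (ys ! t))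
       = (\<Prod>t<n. \<Sum>x\<in>UNIV. \<Sum>y\<in>UNIV. F t x y)"
proof -
  have "(\<Sum>(xs, ys)\<in>blocks n. \<Prod>t<n. F t (xs ! t) (ys ! t))
      = (\<Sum>xs | length xs = n. \<Sum>ys | length ys = n. \<Prod>t<n. F t (xs ! t) (ys ! t))"
    by (rule sum.cartesian_product[symmetric])
  also have "\<dots> = (\<Sum>xs | length xs = n. \<Prod>t<n. \<Sum>y\<in>UNIV. F t (xs ! t) y)"
  proof (rule sum.cong[OF refl])
    fix xs :: "'x list"
    show "(\<Sum>ys | length ys = n. \<Prod>t<n. F t (xs ! t) (ys ! t)) = (\<Prod>t<n. \<Sum>y\<in>UNIV. F t (xs ! t) y)"
      by (rule sum_lists_length_prod[where F = "\<lambda>t y. F t (xs ! t) y"])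
  qed
  also have "\<dots> = (\<Prod>t<n. \<Sum>x\<in>UNIV. \<Sum>y\<in>UNIV. F t x y)"
    by (rule sum_lists_length_prod)
  finally show ?thesis .
qed

lemma prod_if_zero:
  "(\<Prod>t<(n::nat). if R t then a t else 0) = (if \<forall>t<n. R t then \<Prod>t<n. a t else (0::'a::comm_semiring_1))"
  by (induction n) (auto simp: less_Suc_eq)

lemma sum_pairs_if:
  fixes P :: "'x::finite \<Rightarrow> 'y::finite \<Rightarrow> 'a::comm_monoid_add"
  shows "(\<Sum>x\<in>UNIV. \<Sum>y\<in>UNIV. if R x y then P x y else 0) = sum (case_prod P) {(x, y). R x y}"
proof -
  have "(\<Sum>x\<in>UNIV. \<Sum>y\<in>UNIV. if R x y then P x y else 0)
      = (\<Sum>\<omega>\<in>UNIV. if case_prod R \<omega> then case_prod P \<omega> else 0)"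
    by (auto simp: sum.cartesian_product intro!: sum.cong)
  also have "\<dots> = sum (case_prod P) {\<omega>\<in>UNIV. case_prod R \<omega>}"
    by (rule sum.inter_filter[symmetric]) simp
  also have "{\<omega>\<in>UNIV. case_prod R \<omega>} = {(x, y). R x y}"
    by auto
  finally show ?thesis .
qed

lemma sum_blocks_event:
  fixes P :: "'x::finite \<Rightarrow> 'y::finite \<Rightarrow> real"
  shows "sum (case_prod (prod_pmf_n P)) {(xs, ys)\<in>blocks n. \<forall>t<n. R t (xs ! t) (ys ! t)}
       = (\<Prod>t<n. sum (case_prod P) {(x, y). R t x y})"
proof -
  have "{(xs, ys)\<in>blocks n. \<forall>t<n. R t (xs ! t) (ys ! t)}
      = {\<omega>\<in>blocks n. \<forall>t<n. R t (fst \<omega> ! t) (snd \<omega> ! t)}"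
    by auto
  then have "sum (case_prod (prod_pmf_n P)) {(xs, ys)\<in>blocks n. \<forall>t<n. R t (xs ! t) (ys ! t)}
      = (\<Sum>(xs, ys)\<in>blocks n. \<Prod>t<n. if R t (xs ! t) (ys ! t) then P (xs ! t) (ys ! t) else 0)"
    by (auto simp: sum.inter_filter prod_if_zero prod_pmf_n_def case_prod_unfold intro!: sum.cong)
  also have "\<dots> = (\<Prod>t<n. \<Sum>x\<in>UNIV. \<Sum>y\<in>UNIV. if R t x y then P x y else 0)"
    by (rule sum_blocks_prod)
  also have "\<dots> = (\<Prod>t<n. sum (case_prod P) {(x, y). R t x y})"
    by (simp add: sum_pairs_if)
  finally show ?thesis .
qed

section \<open>Prefix codes and the source coding converse\<close>

lemma prefix_free_subset: "prefix_free C \<Longrightarrow> D \<subseteq> C \<Longrightarrow> prefix_free D"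
  unfolding prefix_free_def by blast

lemma kraft_inequality:
  assumes "finite C" and "prefix_free C"
  shows "(\<Sum>w\<in>C. (1/2::real) ^ length w) \<le> 1"
proof -
  obtain N where "\<forall>w\<in>C. length w \<le> N"
    using assms(1) finite_nat_set_iff_bounded_le[of "length ` C"] by auto
  then show ?thesis
    using assms
  proof (induction N arbitrary: C)
    case 0
    then have "C = {} \<or> C = {[]}"
      by auto
    then show ?case
      by auto
  next
    case (Suc N)
    show ?case
    proof (cases "[] \<in> C")
      case True
      have "w = []" if "w \<in> C" for w
        using that True Suc.prems(3) unfolding prefix_free_def by (metis Nil_prefix)
      with True have "C = {[]}"
        by blast
      then show ?thesis
        by simp
    next
      case False
      then have C_eq: "C = Cons True ` (Cons True -` C) \<union> Cons False ` (Cons False -` C)"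
        by (auto simp: image_iff) (metis (full_types) list.exhaust)
      have tails: "\<forall>w\<in>Cons b -` C. length w \<le> N" "finite (Cons b -` C)" "prefix_free (Cons b -` C)"
        for b
        using Suc.prems unfolding prefix_free_def
        by (auto intro: finite_vimageI) (metis Cons_prefix_Cons list.inject)
      have "(\<Sum>w\<in>C. (1/2::real) ^ length w)
          = (\<Sum>w\<in>Cons True ` (Cons True -` C). (1/2::real) ^ length w)
            + (\<Sum>w\<in>Cons False ` (Cons False -` C). (1/2) ^ length w)"
        by (subst C_eq, rule sum.union_disjoint) (use Suc.prems(2) in auto)
      also have "\<dots> = (\<Sum>w\<in>Cons True -` C. (1/2::real) ^ length w) / 2
                     + (\<Sum>w\<in>Cons False -` C. (1/2) ^ length w) / 2"
        by (subst (1 2) sum.reindex) (auto simp: inj_on_def sum_divide_distrib)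
      also have "\<dots> \<le> 1"
        using Suc.IH[OF tails, of True] Suc.IH[OF tails, of False] by linarith
      finally show ?thesis .
    qed
  qed
qed

lemma sum_pos_subset:
  fixes p :: "'a \<Rightarrow> 'b::ordered_comm_monoid_add"
  assumes "finite \<Omega>" and "\<And>\<omega>. \<omega> \<in> \<Omega> \<Longrightarrow> p \<omega> > 0" and "\<omega> \<in> S" and "S \<subseteq> \<Omega>"
  shows "sum p S > 0"
  using assms by (intro sum_pos2[of _ \<omega>]) (auto intro: less_imp_le finite_subset)

text \<open>Pointwise Gibbs inequality: \<open>ln y \<le> y - 1\<close> for \<open>y = a 2^(-l) / b\<close>.\<close>
lemma log2_div_le:
  fixes a b :: real
  assumes "a > 0" and "b > 0"
  shows "log 2 (a / b) \<le> l + (a * (1/2) ^ l / b - 1) / ln 2"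
proof -
  define y where "y = a * (1/2) ^ l / b"
  have "y > 0" "log 2 (a / b) = log 2 y + l"
    using assms by (auto simp: y_def log_mult_pos log_nat_power log_divide_pos)
  moreover have "log 2 y \<le> (y - 1) / ln 2"
    using ln_le_minus_one[of y] \<open>y > 0\<close> by (simp add: log_def divide_right_mono)
  ultimately show ?thesis
    unfolding y_def by simp
qed

text \<open>\<open>cond_info p \<Omega> \<kappa> \<beta> \<omega>\<close> is \<open>-log\<^sub>2 Pr[\<kappa> = \<kappa> \<omega> | \<beta> = \<beta> \<omega>]\<close> for the weights \<open>p\<close>
  on \<open>\<Omega>\<close>; its \<open>p\<close>-average is the conditional entropy \<open>H(\<kappa> | \<beta>)\<close>.\<close>
definition cond_info :: "('a \<Rightarrow> real) \<Rightarrow> 'a set \<Rightarrow> ('a \<Rightarrow> 'k) \<Rightarrow> ('a \<Rightarrow> 'b) \<Rightarrow> 'a \<Rightarrow> real" where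
  "cond_info p \<Omega> \<kappa> \<beta> \<omega> =
     log 2 (sum p {\<omega>'\<in>\<Omega>. \<beta> \<omega>' = \<beta> \<omega>} / sum p {\<omega>'\<in>\<Omega>. \<kappa> \<omega>' = \<kappa> \<omega> \<and> \<beta> \<omega>' = \<beta> \<omega>})"

lemma cond_info_mono:
  assumes fin: "finite \<Omega>" and pos: "\<And>\<omega>. \<omega> \<in> \<Omega> \<Longrightarrow> p \<omega> > 0" and "\<omega> \<in> \<Omega>"
    and finer: "\<And>\<omega>'. \<omega>' \<in> \<Omega> \<Longrightarrow> \<beta> \<omega>' = \<beta> \<omega> \<Longrightarrow> \<kappa>' \<omega>' = \<kappa>' \<omega> \<Longrightarrow> \<kappa> \<omega>' = \<kappa> \<omega>"
  shows "cond_info p \<Omega> \<kappa> \<beta> \<omega> \<le> cond_info p \<Omega> \<kappa>' \<beta> \<omega>"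
proof -
  let ?T = "sum p {\<omega>'\<in>\<Omega>. \<beta> \<omega>' = \<beta> \<omega>}"
  let ?Q = "sum p {\<omega>'\<in>\<Omega>. \<kappa> \<omega>' = \<kappa> \<omega> \<and> \<beta> \<omega>' = \<beta> \<omega>}"
  let ?Q' = "sum p {\<omega>'\<in>\<Omega>. \<kappa>' \<omega>' = \<kappa>' \<omega> \<and> \<beta> \<omega>' = \<beta> \<omega>}"
  have "?Q' \<le> ?Q"
    using fin pos finer by (intro sum_mono2) (auto intro: less_imp_le)
  moreover have "?T > 0" "?Q' > 0"
    using fin pos \<open>\<omega> \<in> \<Omega>\<close> by (auto intro: sum_pos_subset)
  ultimately have "?T / ?Q \<le> ?T / ?Q'" "?T / ?Q > 0"
    by (auto intro: divide_left_mono)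
  then show ?thesis
    unfolding cond_info_def by (simp add: log_mono)
qed

lemma kraft_inequality_fibres:
  fixes p :: "'a \<Rightarrow> real" and c :: "'a \<Rightarrow> bool list"
  assumes fin: "finite \<Omega>" and pos: "\<And>\<omega>. \<omega> \<in> \<Omega> \<Longrightarrow> p \<omega> > 0" and pf: "prefix_free (c ` \<Omega>)"
  shows "(\<Sum>\<omega>\<in>\<Omega>. p \<omega> * (1/2) ^ length (c \<omega>) / sum p {\<omega>'\<in>\<Omega>. c \<omega>' = c \<omega>}) \<le> 1"
proof -
  have "(\<Sum>\<omega>\<in>\<Omega>. p \<omega> * (1/2) ^ length (c \<omega>) / sum p {\<omega>'\<in>\<Omega>. c \<omega>' = c \<omega>})
      = (\<Sum>w\<in>c ` \<Omega>. \<Sum>\<omega>\<in>{\<omega>'\<in>\<Omega>. c \<omega>' = w}. p \<omega> * (1/2) ^ length w / sum p {\<omega>'\<in>\<Omega>. c \<omega>' = w})"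
    by (subst sum.image_gen[OF fin, of _ c]) (auto intro!: sum.cong)
  also have "\<dots> = (\<Sum>w\<in>c ` \<Omega>. (1/2) ^ length w)"
  proof (rule sum.cong[OF refl])
    fix w assume "w \<in> c ` \<Omega>"
    then have "sum p {\<omega>'\<in>\<Omega>. c \<omega>' = w} > 0"
      using fin pos by (auto intro: sum_pos_subset)
    then show "(\<Sum>\<omega>\<in>{\<omega>'\<in>\<Omega>. c \<omega>' = w}. p \<omega> * (1/2) ^ length w / sum p {\<omega>'\<in>\<Omega>. c \<omega>' = w})
        = (1/2) ^ length w"
      by (simp add: sum_divide_distrib[symmetric] sum_distrib_right[symmetric])
  qed
  also have "\<dots> \<le> 1"
    using fin pf by (intro kraft_inequality) auto
  finally show ?thesis .
qed

lemma source_coding_converse: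
  fixes p :: "'a \<Rightarrow> real" and c :: "'a \<Rightarrow> bool list"
  assumes fin: "finite \<Omega>" and pos: "\<And>\<omega>. \<omega> \<in> \<Omega> \<Longrightarrow> p \<omega> > 0" and pf: "prefix_free (c ` \<Omega>)"
  shows "(\<Sum>\<omega>\<in>\<Omega>. p \<omega> * log 2 (sum p \<Omega> / sum p {\<omega>'\<in>\<Omega>. c \<omega>' = c \<omega>}))
       \<le> (\<Sum>\<omega>\<in>\<Omega>. p \<omega> * length (c \<omega>))"
proof -
  define T where "T = sum p \<Omega>"
  define m where "m \<omega> = sum p {\<omega>'\<in>\<Omega>. c \<omega>' = c \<omega>}" for \<omega>
  have "(\<Sum>\<omega>\<in>\<Omega>. p \<omega> * log 2 (T / m \<omega>))
      \<le> (\<Sum>\<omega>\<in>\<Omega>. p \<omega> * length (c \<omega>) + (T * (p \<omega> * (1/2) ^ length (c \<omega>) / m \<omega>) - p \<omega>) / ln 2)"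
  proof (rule sum_mono)
    fix \<omega> assume "\<omega> \<in> \<Omega>"
    then have "T > 0" "m \<omega> > 0"
      unfolding T_def m_def using fin pos by (auto intro: sum_pos_subset)
    then have "p \<omega> * log 2 (T / m \<omega>) \<le> p \<omega> * (length (c \<omega>) + (T * (1/2) ^ length (c \<omega>) / m \<omega> - 1) / ln 2)"
      using pos[OF \<open>\<omega> \<in> \<Omega>\<close>] by (intro mult_left_mono log2_div_le) auto
    then show "p \<omega> * log 2 (T / m \<omega>)
        \<le> p \<omega> * length (c \<omega>) + (T * (p \<omega> * (1/2) ^ length (c \<omega>) / m \<omega>) - p \<omega>) / ln 2"
      by (simp add: algebra_simps diff_divide_distrib)
  qed
  also have "\<dots> = (\<Sum>\<omega>\<in>\<Omega>. p \<omega> * length (c \<omega>)) + (T * (\<Sum>\<omega>\<in>\<Omega>. p \<omega> * (1/2) ^ length (c \<omega>) / m \<omega>) - T) / ln 2"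
    by (simp add: T_def sum.distrib sum_subtractf sum_divide_distrib[symmetric] sum_distrib_left)
  also have "\<dots> \<le> (\<Sum>\<omega>\<in>\<Omega>. p \<omega> * length (c \<omega>))"
    using mult_left_mono[OF kraft_inequality_fibres[OF assms], where c = T] sum_nonneg[of \<Omega> p] pos
    by (simp add: T_def m_def divide_nonpos_pos less_imp_le)
  finally show ?thesis
    unfolding T_def m_def .
qed

lemma cond_source_coding_converse:
  fixes p :: "'a \<Rightarrow> real" and c :: "'a \<Rightarrow> bool list"
  assumes fin: "finite \<Omega>" and pos: "\<And>\<omega>. \<omega> \<in> \<Omega> \<Longrightarrow> p \<omega> > 0"
    and pf: "\<And>b. prefix_free (c ` {\<omega>\<in>\<Omega>. \<beta> \<omega> = b})"
    and sep: "\<And>\<omega> \<omega>'. \<omega> \<in> \<Omega> \<Longrightarrow> \<omega>' \<in> \<Omega> \<Longrightarrow> \<beta> \<omega>' = \<beta> \<omega> \<Longrightarrow> c \<omega>' = c \<omega> \<Longrightarrow> \<kappa> \<omega>' = \<kappa> \<omega>"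
  shows "(\<Sum>\<omega>\<in>\<Omega>. p \<omega> * cond_info p \<Omega> \<kappa> \<beta> \<omega>) \<le> (\<Sum>\<omega>\<in>\<Omega>. p \<omega> * length (c \<omega>))"
proof -
  have class_info: "cond_info p \<Omega> c \<beta> \<omega>
      = log 2 (sum p {\<omega>\<in>\<Omega>. \<beta> \<omega> = b} / sum p {\<omega>'\<in>{\<omega>\<in>\<Omega>. \<beta> \<omega> = b}. c \<omega>' = c \<omega>})"
    if "\<beta> \<omega> = b" for \<omega> b
  proof -
    have "{\<omega>'\<in>\<Omega>. c \<omega>' = c \<omega> \<and> \<beta> \<omega>' = \<beta> \<omega>} = {\<omega>'\<in>{\<omega>\<in>\<Omega>. \<beta> \<omega> = b}. c \<omega>' = c \<omega>}"
      using that by auto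
    then show ?thesis
      by (simp add: cond_info_def that)
  qed
  have "(\<Sum>\<omega>\<in>\<Omega>. p \<omega> * cond_info p \<Omega> \<kappa> \<beta> \<omega>) \<le> (\<Sum>\<omega>\<in>\<Omega>. p \<omega> * cond_info p \<Omega> c \<beta> \<omega>)"
  proof (rule sum_mono)
    fix \<omega> assume "\<omega> \<in> \<Omega>"
    have "cond_info p \<Omega> \<kappa> \<beta> \<omega> \<le> cond_info p \<Omega> c \<beta> \<omega>"
      by (rule cond_info_mono[where \<kappa> = \<kappa> and \<beta> = \<beta> and \<kappa>' = c, OF fin pos \<open>\<omega> \<in> \<Omega>\<close> sep[OF \<open>\<omega> \<in> \<Omega>\<close>]])
    then show "p \<omega> * cond_info p \<Omega> \<kappa> \<beta> \<omega> \<le> p \<omega> * cond_info p \<Omega> c \<beta> \<omega>"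
      using pos[OF \<open>\<omega> \<in> \<Omega>\<close>] by (simp add: mult_left_mono)
  qed
  also have "\<dots> = (\<Sum>b\<in>\<beta> ` \<Omega>. \<Sum>\<omega>\<in>{\<omega>\<in>\<Omega>. \<beta> \<omega> = b}.
      p \<omega> * log 2 (sum p {\<omega>\<in>\<Omega>. \<beta> \<omega> = b} / sum p {\<omega>'\<in>{\<omega>\<in>\<Omega>. \<beta> \<omega> = b}. c \<omega>' = c \<omega>}))"
    by (subst sum.image_gen[OF fin, of _ \<beta>]) (auto intro!: sum.cong simp: class_info)
  also have "\<dots> \<le> (\<Sum>b\<in>\<beta> ` \<Omega>. \<Sum>\<omega>\<in>{\<omega>\<in>\<Omega>. \<beta> \<omega> = b}. p \<omega> * length (c \<omega>))"
    using fin pos pf by (intro sum_mono source_coding_converse) auto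
  also have "\<dots> = (\<Sum>\<omega>\<in>\<Omega>. p \<omega> * length (c \<omega>))"
    by (rule sum.image_gen[OF fin, symmetric])
  finally show ?thesis .
qed

section \<open>Ranking codes\<close>

text \<open>A ranking by decreasing weight: each \<open>k\<close> is outweighed by the \<open>r k - 1\<close> elements
  ranked before it, whence \<open>r k * q k \<le> sum q K\<close>.\<close>
definition weight_ranking :: "'a set \<Rightarrow> ('a \<Rightarrow> real) \<Rightarrow> ('a \<Rightarrow> nat) \<Rightarrow> bool" where
  "weight_ranking K q r \<longleftrightarrow>
     inj_on r K \<and> r ` K \<subseteq> {1..card K} \<and> (\<forall>k\<in>K. real (r k) * q k \<le> sum q K)"

lemma ex_weight_ranking:
  assumes "finite K" and "\<And>k. k \<in> K \<Longrightarrow> q k \<ge> 0"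
  shows "\<exists>r. weight_ranking K q r"
  using assms
proof (induction K rule: finite_remove_induct)
  case empty
  show ?case
    by (simp add: weight_ranking_def)
next
  case (remove K)
  obtain m where m: "m \<in> K" "\<And>k. k \<in> K \<Longrightarrow> q m \<le> q k"
    using arg_min_if_finite[OF \<open>finite K\<close> \<open>K \<noteq> {}\<close>, of q] by (metis not_less)
  obtain r where r: "weight_ranking (K - {m}) q r"
    using remove.IH[OF m(1)] remove.prems by blast
  have card_K: "card (K - {m}) = card K - 1" "card K \<ge> 1"
    using m(1) \<open>finite K\<close> by (auto simp: card_gt_0_iff Suc_le_eq)
  have "weight_ranking K q (r(m := card K))"
    unfolding weight_ranking_def
  proof (intro conjI ballI)
    have "card K \<notin> r ` (K - {m})"
      using r card_K unfolding weight_ranking_def by fastforce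
    then show "inj_on (r(m := card K)) K"
      using r m(1) unfolding weight_ranking_def by (auto simp: inj_on_def) (metis DiffI imageI singletonD)
    show "(r(m := card K)) ` K \<subseteq> {1..card K}"
      using r card_K unfolding weight_ranking_def by fastforce
    have "sum q (K - {m}) \<le> sum q K"
      using m(1) remove.prems \<open>finite K\<close> by (intro sum_mono2) auto
    fix k assume "k \<in> K"
    show "real ((r(m := card K)) k) * q k \<le> sum q K"
    proof (cases "k = m")
      case True
      then show ?thesis
        using sum_mono[of K "\<lambda>_. q m" q] m(2) by simp
    next
      case False
      then show ?thesis
        using r \<open>k \<in> K\<close> \<open>sum q (K - {m}) \<le> sum q K\<close> unfolding weight_ranking_def by force
    qed
  qed
  then show ?case
    by blast
qed

lemma log_rank_le_cond_info:
  fixes p :: "'a \<Rightarrow> real"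
  assumes fin: "finite \<Omega>" and pos: "\<And>\<omega>. \<omega> \<in> \<Omega> \<Longrightarrow> p \<omega> > 0" and "\<omega> \<in> \<Omega>"
    and "finite K" and K: "\<kappa> ` {\<omega>'\<in>\<Omega>. \<beta> \<omega>' = \<beta> \<omega>} \<subseteq> K"
    and r: "weight_ranking K (\<lambda>k. sum p {\<omega>'\<in>\<Omega>. \<kappa> \<omega>' = k \<and> \<beta> \<omega>' = \<beta> \<omega>}) r"
  shows "log 2 (r (\<kappa> \<omega>)) \<le> cond_info p \<Omega> \<kappa> \<beta> \<omega>"
proof -
  define q where "q k = sum p {\<omega>'\<in>\<Omega>. \<kappa> \<omega>' = k \<and> \<beta> \<omega>' = \<beta> \<omega>}" for k
  have "sum q K = sum q (\<kappa> ` {\<omega>'\<in>\<Omega>. \<beta> \<omega>' = \<beta> \<omega>})"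
    using \<open>finite K\<close> K by (intro sum.mono_neutral_right) (auto simp: q_def image_iff intro!: sum.neutral)
  also have "\<dots> = sum p {\<omega>'\<in>\<Omega>. \<beta> \<omega>' = \<beta> \<omega>}"
    using fin by (subst sum.image_gen[of _ _ \<kappa>]) (auto simp: q_def intro!: sum.cong)
  finally have sum_q: "sum q K = sum p {\<omega>'\<in>\<Omega>. \<beta> \<omega>' = \<beta> \<omega>}" .
  have q_pos: "q (\<kappa> \<omega>) > 0"
    unfolding q_def using fin pos \<open>\<omega> \<in> \<Omega>\<close> by (auto intro: sum_pos_subset)
  have "\<kappa> \<omega> \<in> K"
    using K \<open>\<omega> \<in> \<Omega>\<close> by auto
  then have "real (r (\<kappa> \<omega>)) * q (\<kappa> \<omega>) \<le> sum q K" "r (\<kappa> \<omega>) \<ge> 1"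
    using r unfolding weight_ranking_def q_def by (auto simp: image_subset_iff)
  then have "real (r (\<kappa> \<omega>)) \<le> sum q K / q (\<kappa> \<omega>)" "real (r (\<kappa> \<omega>)) > 0"
    using q_pos by (auto simp: field_simps)
  then show ?thesis
    unfolding cond_info_def sum_q[symmetric] q_def by (simp add: log_mono)
qed

definition bits :: "nat \<Rightarrow> nat \<Rightarrow> bool list" where
  "bits k v = map (bit v) [0..<k]"

lemma length_bits [simp]: "length (bits k v) = k"
  by (simp add: bits_def)

lemma inj_on_bits: "inj_on (bits k) {..<2 ^ k}"
proof (rule inj_onI)
  fix v v' assume "v \<in> {..<2 ^ k}" "v' \<in> {..<2 ^ k}" "bits k v = bits k v'"
  then have "take_bit k v = take_bit k v'"
    by (intro bit_eqI) (auto simp: bits_def bit_take_bit_iff list_eq_iff_nth_eq)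
  then show "v = v'"
    using \<open>v \<in> {..<2 ^ k}\<close> \<open>v' \<in> {..<2 ^ k}\<close> by (simp add: take_bit_nat_eq_self)
qed

lemma less_two_power_floorlog: "r < 2 ^ floorlog 2 r"
  using floorlog_le_iff[of 2 r "floorlog 2 r"] by simp

lemma floorlog_le_log: "r \<ge> 1 \<Longrightarrow> floorlog 2 r \<le> log 2 r + 1"
  by (simp add: floorlog_def)

definition length_prefixed :: "nat \<Rightarrow> nat \<Rightarrow> bool list" where
  "length_prefixed w r = bits w (floorlog 2 r) @ bits (floorlog 2 r) r"

lemma length_length_prefixed: "length (length_prefixed w r) = w + floorlog 2 r"
  by (simp add: length_prefixed_def)

lemma length_prefixed_header_eq:
  assumes "floorlog 2 r < 2 ^ w" "floorlog 2 r' < 2 ^ w"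
    and "take w (length_prefixed w r) = take w (length_prefixed w r')"
  shows "floorlog 2 r = floorlog 2 r'"
  using assms inj_on_bits[of w] by (auto simp: length_prefixed_def inj_on_def)

lemma inj_on_length_prefixed: "inj_on (length_prefixed w) {r. floorlog 2 r < 2 ^ w}"
proof (rule inj_onI)
  fix r r' assume r: "r \<in> {r. floorlog 2 r < 2 ^ w}" "r' \<in> {r. floorlog 2 r < 2 ^ w}"
    and eq: "length_prefixed w r = length_prefixed w r'"
  then have len: "floorlog 2 r = floorlog 2 r'"
    by (intro length_prefixed_header_eq) auto
  then have "bits (floorlog 2 r) r = bits (floorlog 2 r) r'"
    using eq by (simp add: length_prefixed_def)
  then show "r = r'"
    using inj_on_bits len less_two_power_floorlog by (metis inj_on_contraD lessThan_iff)
qed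

lemma prefix_free_length_prefixed: "prefix_free (length_prefixed w ` {r. floorlog 2 r < 2 ^ w})"
  unfolding prefix_free_def
proof (clarsimp)
  fix r r' assume r: "floorlog 2 r < 2 ^ w" "floorlog 2 r' < 2 ^ w"
    and ne: "length_prefixed w r \<noteq> length_prefixed w r'"
    and pre: "prefix (length_prefixed w r) (length_prefixed w r')"
  then obtain s where s: "length_prefixed w r' = length_prefixed w r @ s"
    by (auto elim: prefixE)
  then have "take w (length_prefixed w r) = take w (length_prefixed w r')"
    by (simp add: length_length_prefixed)
  then have "length (length_prefixed w r) = length (length_prefixed w r')"
    using length_prefixed_header_eq[OF r] by (simp add: length_length_prefixed)
  then show False
    using s ne by simp
qed

section \<open>Conditional entropy of i.i.d. blocks\<close>

lemma log_prod:
  assumes "finite I" and "\<And>i. i \<in> I \<Longrightarrow> f i > 0"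
  shows "log b (prod f I) = (\<Sum>i\<in>I. log b (f i))"
proof -
  have "ln (prod f I) = (\<Sum>i\<in>I. ln (f i))"
    using assms by (intro ln_prod) (auto simp: less_imp_neq[symmetric])
  then show ?thesis
    by (simp add: log_def sum_divide_distrib)
qed

locale iid_source =
  fixes P :: "'x::finite \<Rightarrow> 'y::finite \<Rightarrow> real"
  assumes P_pos: "\<And>x y. P x y > 0"
    and P_sum_one: "(\<Sum>x\<in>UNIV. \<Sum>y\<in>UNIV. P x y) = 1"
begin

abbreviation block_pmf :: "'x list \<times> 'y list \<Rightarrow> real" where
  "block_pmf \<equiv> case_prod (prod_pmf_n P)"

lemma block_pmf_pos: "block_pmf \<omega> > 0"
  by (cases \<omega>) (simp add: prod_pmf_n_def P_pos prod_pos)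

lemma sum_block_pmf: "sum block_pmf (blocks n) = 1"
  using sum_blocks_event[of P n "\<lambda>_ _ _. True"] P_sum_one by (simp add: sum.cartesian_product)

lemma expectation_additive:
  "(\<Sum>(xs, ys)\<in>blocks n. prod_pmf_n P xs ys * (\<Sum>t<n. h (xs ! t) (ys ! t)))
     = real n * (\<Sum>x\<in>UNIV. \<Sum>y\<in>UNIV. P x y * h x y)"
proof -
  have factor: "prod_pmf_n P xs ys * h (xs ! t) (ys ! t)
      = (\<Prod>s<n. P (xs ! s) (ys ! s) * (if s = t then h (xs ! s) (ys ! s) else 1))"
    if "length xs = n" "t < n" for xs ys t
    using that by (simp add: prod_pmf_n_def prod.distrib)
  have "(\<Sum>(xs, ys)\<in>blocks n. prod_pmf_n P xs ys * (\<Sum>t<n. h (xs ! t) (ys ! t)))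
      = (\<Sum>t<n. \<Sum>(xs, ys)\<in>blocks n. \<Prod>s<n. P (xs ! s) (ys ! s) * (if s = t then h (xs ! s) (ys ! s) else 1))"
    by (subst sum.swap) (auto simp: sum_distrib_left factor intro!: sum.cong)
  also have "\<dots> = (\<Sum>t<n. \<Prod>s<n. \<Sum>x\<in>UNIV. \<Sum>y\<in>UNIV. P x y * (if s = t then h x y else 1))"
  proof (rule sum.cong[OF refl])
    fix t
    show "(\<Sum>(xs, ys)\<in>blocks n. \<Prod>s<n. P (xs ! s) (ys ! s) * (if s = t then h (xs ! s) (ys ! s) else 1))
        = (\<Prod>s<n. \<Sum>x\<in>UNIV. \<Sum>y\<in>UNIV. P x y * (if s = t then h x y else 1))"
      by (rule sum_blocks_prod[where F = "\<lambda>s x y. P x y * (if s = t then h x y else 1)"])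
  qed
  also have "\<dots> = (\<Sum>t<n. \<Prod>s<n. if s = t then (\<Sum>x\<in>UNIV. \<Sum>y\<in>UNIV. P x y * h x y) else 1)"
    using P_sum_one by (intro sum.cong prod.cong) auto
  also have "\<dots> = real n * (\<Sum>x\<in>UNIV. \<Sum>y\<in>UNIV. P x y * h x y)"
    by simp
  finally show ?thesis .
qed

lemma cond_entropy_eq_expected_cond_info:
  "cond_entropy P A B
     = (\<Sum>x\<in>UNIV. \<Sum>y\<in>UNIV. P x y * cond_info (case_prod P) UNIV (case_prod A) (case_prod B) (x, y))"
proof -
  define F where "F = (\<lambda>(x, y). (A x y, B x y))"
  define pAB where "pAB v = sum (case_prod P) {\<omega>. F \<omega> = v}" for v
  define pB where "pB b = sum (case_prod P) {\<omega>. snd (F \<omega>) = b}" for b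
  have info: "cond_info (case_prod P) UNIV (case_prod A) (case_prod B) \<omega>
      = - log 2 (pAB (F \<omega>) / pB (snd (F \<omega>)))" for \<omega>
  proof -
    have "{\<omega>'\<in>UNIV. case_prod A \<omega>' = case_prod A \<omega> \<and> case_prod B \<omega>' = case_prod B \<omega>}
        = {\<omega>'. F \<omega>' = F \<omega>}"
      "{\<omega>'\<in>UNIV. case_prod B \<omega>' = case_prod B \<omega>} = {\<omega>'. snd (F \<omega>') = snd (F \<omega>)}"
      by (auto simp: F_def case_prod_unfold)
    then show ?thesis
      unfolding cond_info_def pAB_def pB_def by (simp add: log_inverse[symmetric])
  qed
  have "(\<Sum>x\<in>UNIV. \<Sum>y\<in>UNIV. P x y * cond_info (case_prod P) UNIV (case_prod A) (case_prod B) (x, y))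
      = (\<Sum>\<omega>\<in>UNIV. case_prod P \<omega> * - log 2 (pAB (F \<omega>) / pB (snd (F \<omega>))))"
    unfolding info by (simp add: sum.cartesian_product case_prod_unfold)
  also have "\<dots> = (\<Sum>v\<in>F ` UNIV. \<Sum>\<omega>\<in>{\<omega>. F \<omega> = v}. case_prod P \<omega> * - log 2 (pAB v / pB (snd v)))"
    by (subst sum.image_gen[of UNIV _ F]) auto
  also have "\<dots> = - (\<Sum>v\<in>F ` UNIV. pAB v * log 2 (pAB v / pB (snd v)))"
    by (simp add: pAB_def sum_distrib_right[symmetric] sum_negf)
  also have "\<dots> = cond_entropy P A B"
    unfolding cond_entropy_def Let_def pAB_def pB_def F_def
    by (intro arg_cong[where f = uminus] sum.cong refl)
      (auto intro!: arg_cong2[where f = "\<lambda>a b. a * log 2 (a / b)"] arg_cong[where f = "sum (case_prod P)"])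
  finally show ?thesis ..
qed

lemma cond_info_blocks:
  assumes "(xs, ys) \<in> blocks n"
  shows "cond_info block_pmf (blocks n) (case_prod (map2 A)) (case_prod (map2 B)) (xs, ys)
       = (\<Sum>t<n. cond_info (case_prod P) UNIV (case_prod A) (case_prod B) (xs ! t, ys ! t))"
proof -
  define T where "T t = sum (case_prod P) {(x, y). B x y = B (xs ! t) (ys ! t)}" for t
  define Q where "Q t = sum (case_prod P) {(x, y). A x y = A (xs ! t) (ys ! t) \<and> B x y = B (xs ! t) (ys ! t)}" for t
  have events: "{\<omega>\<in>blocks n. case_prod (map2 B) \<omega> = case_prod (map2 B) (xs, ys)}
      = {(xs', ys')\<in>blocks n. \<forall>t<n. B (xs' ! t) (ys' ! t) = B (xs ! t) (ys ! t)}"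
    "{\<omega>\<in>blocks n. case_prod (map2 A) \<omega> = case_prod (map2 A) (xs, ys)
                   \<and> case_prod (map2 B) \<omega> = case_prod (map2 B) (xs, ys)}
      = {(xs', ys')\<in>blocks n. \<forall>t<n. A (xs' ! t) (ys' ! t) = A (xs ! t) (ys ! t)
                                    \<and> B (xs' ! t) (ys' ! t) = B (xs ! t) (ys ! t)}"
    using assms by (auto simp: list_eq_iff_nth_eq)
  have "cond_info block_pmf (blocks n) (case_prod (map2 A)) (case_prod (map2 B)) (xs, ys)
      = log 2 ((\<Prod>t<n. T t) / (\<Prod>t<n. Q t))"
    unfolding cond_info_def events T_def Q_def
      sum_blocks_event[where R = "\<lambda>t x y. B x y = B (xs ! t) (ys ! t)"]
      sum_blocks_event[where R = "\<lambda>t x y. A x y = A (xs ! t) (ys ! t) \<and> B x y = B (xs ! t) (ys ! t)"] ..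
  also have "\<dots> = (\<Sum>t<n. log 2 (T t / Q t))"
    unfolding prod_dividef[symmetric] T_def Q_def
    by (intro log_prod) (auto intro!: divide_pos_pos sum_pos2 simp: P_pos less_imp_le)
  also have "\<dots> = (\<Sum>t<n. cond_info (case_prod P) UNIV (case_prod A) (case_prod B) (xs ! t, ys ! t))"
    unfolding cond_info_def T_def Q_def
    by (intro sum.cong refl arg_cong[where f = "log 2"])
      (auto intro!: arg_cong2[where f = "(/)"] arg_cong[where f = "sum (case_prod P)"])
  finally show ?thesis .
qed

lemma expected_cond_info_blocks:
  "(\<Sum>\<omega>\<in>blocks n. block_pmf \<omega> * cond_info block_pmf (blocks n) (case_prod (map2 A)) (case_prod (map2 B)) \<omega>)
     = real n * cond_entropy P A B"
proof -
  have "(\<Sum>\<omega>\<in>blocks n. block_pmf \<omega> * cond_info block_pmf (blocks n) (case_prod (map2 A)) (case_prod (map2 B)) \<omega>)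
      = (\<Sum>(xs, ys)\<in>blocks n. prod_pmf_n P xs ys
            * (\<Sum>t<n. cond_info (case_prod P) UNIV (case_prod A) (case_prod B) (xs ! t, ys ! t)))"
    by (intro sum.cong refl) (auto simp: cond_info_blocks)
  also have "\<dots> = real n * cond_entropy P A B"
    unfolding cond_entropy_eq_expected_cond_info
    by (rule expectation_additive[where h = "\<lambda>x y. cond_info (case_prod P) UNIV (case_prod A) (case_prod B) (x, y)"])
  finally show ?thesis .
qed

end

section \<open>Zero-error computation with encoder side information\<close>

lemma LIMSEQ_log_add_const_div_n: "(\<lambda>n. (log 2 n + C) / n) \<longlonglongrightarrow> 0"
proof -
  have "(\<lambda>n. ln (real n) / real n) \<longlonglongrightarrow> 0"
    using filterlim_compose[OF ln_x_over_x_tendsto_0 filterlim_real_sequentially] .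
  then have "(\<lambda>n. (ln (real n) / real n) / ln 2 + C / real n) \<longlonglongrightarrow> 0 / ln 2 + 0"
    by (intro tendsto_add tendsto_divide tendsto_const lim_const_over_n) auto
  moreover have "(\<lambda>n. (log 2 n + C) / n) = (\<lambda>n. (ln (real n) / real n) / ln 2 + C / real n)"
    by (simp add: log_def add_divide_distrib mult.commute)
  ultimately show ?thesis
    by simp
qed

lemma optimal_rate_eqI:
  assumes "achievable_rate P f g R"
    and "\<And>n enc dec. n \<ge> 1 \<Longrightarrow> zero_error_code f g n enc dec \<Longrightarrow> R \<le> code_rate P g n enc"
  shows "optimal_rate P f g = R"
  unfolding optimal_rate_def
proof (rule cInf_eq_minimum)
  show "R \<in> {R. achievable_rate P f g R}"
    using assms(1) by simp
  fix R' assume "R' \<in> {R. achievable_rate P f g R}"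
  then obtain enc dec where "\<forall>n\<ge>1. zero_error_code f g n (enc n) (dec n)"
    and "(\<lambda>n. code_rate P g n (enc n)) \<longlonglongrightarrow> R'"
    unfolding achievable_rate_def by blast
  then show "R \<le> R'"
    using assms(2) by (intro LIMSEQ_le_const[of "\<lambda>n. code_rate P g n (enc n)" R' R]) (auto intro!: exI[of _ 1])
qed

locale zero_error_computation = iid_source P
  for P :: "'x::finite \<Rightarrow> 'y::finite \<Rightarrow> real" +
  fixes f :: "'x \<Rightarrow> 'y \<Rightarrow> 'u" and g :: "'y \<Rightarrow> 'z" and ys0 :: "'y list"
  assumes ys0_UNIV: "set ys0 = UNIV"
begin

abbreviation H_jz :: real where
  "H_jz \<equiv> cond_entropy P (\<lambda>x y. jfun ys0 f g x (g y)) (\<lambda>x y. g y)"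

abbreviation j_block :: "'x list \<times> 'y list \<Rightarrow> 'u list list" where
  "j_block \<equiv> case_prod (map2 (\<lambda>x y. jfun ys0 f g x (g y)))"

abbreviation z_block :: "'x list \<times> 'y list \<Rightarrow> 'z list" where
  "z_block \<equiv> case_prod (map2 (\<lambda>x y. g y))"

lemma map2_jfun_eq: "map2 (\<lambda>x y. jfun ys0 f g x (g y)) xs ys = map2 (jfun ys0 f g) xs (map g ys)"
  by (simp add: zip_map2 split_beta)

lemma map2_g_eq: "length xs = length ys \<Longrightarrow> map2 (\<lambda>x y. g y) xs ys = map g ys"
  by (induction xs ys rule: list_induct2) auto

lemma jfun_eq_iff: "jfun ys0 f g x z = jfun ys0 f g x' z \<longleftrightarrow> (\<forall>y. g y = z \<longrightarrow> f x y = f x' y)"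
  unfolding jfun_def using ys0_UNIV by auto

lemma map2_jfun_eq_iff:
  assumes len: "length xs = length ys" "length xs' = length ys"
  shows "map2 (jfun ys0 f g) xs (map g ys) = map2 (jfun ys0 f g) xs' (map g ys)
     \<longleftrightarrow> (\<forall>ys'. map g ys' = map g ys \<longrightarrow> map2 f xs ys' = map2 f xs' ys')"
proof
  assume j: "map2 (jfun ys0 f g) xs (map g ys) = map2 (jfun ys0 f g) xs' (map g ys)"
  show "\<forall>ys'. map g ys' = map g ys \<longrightarrow> map2 f xs ys' = map2 f xs' ys'"
  proof (intro allI impI)
    fix ys' assume z: "map g ys' = map g ys"
    then have len': "length ys' = length ys"
      by (metis length_map)
    have "f (xs ! t) (ys' ! t) = f (xs' ! t) (ys' ! t)" if "t < length ys" for t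
    proof -
      have "jfun ys0 f g (xs ! t) (g (ys ! t)) = jfun ys0 f g (xs' ! t) (g (ys ! t))"
        using arg_cong[where f = "\<lambda>l. l ! t", OF j] that len by simp
      moreover have "g (ys' ! t) = g (ys ! t)"
        using arg_cong[where f = "\<lambda>l. l ! t", OF z] that len' by simp
      ultimately show ?thesis
        by (simp add: jfun_eq_iff)
    qed
    then show "map2 f xs ys' = map2 f xs' ys'"
      using len len' by (simp add: list_eq_iff_nth_eq)
  qed
next
  assume f_eq: "\<forall>ys'. map g ys' = map g ys \<longrightarrow> map2 f xs ys' = map2 f xs' ys'"
  have "f (xs ! t) y = f (xs' ! t) y" if "t < length ys" "g y = g (ys ! t)" for t y
  proof -
    have "map g (ys[t := y]) = map g ys"
      using that by (metis list_update_id map_update)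
    then have "map2 f xs (ys[t := y]) ! t = map2 f xs' (ys[t := y]) ! t"
      using f_eq by simp
    then show ?thesis
      using that len by simp
  qed
  then have "jfun ys0 f g (xs ! t) (g (ys ! t)) = jfun ys0 f g (xs' ! t) (g (ys ! t))"
    if "t < length ys" for t
    using that by (simp add: jfun_eq_iff)
  then show "map2 (jfun ys0 f g) xs (map g ys) = map2 (jfun ys0 f g) xs' (map g ys)"
    using len by (intro nth_equalityI) simp_all
qed

lemma zero_error_code_jfun_eq:
  assumes code: "zero_error_code f g n enc dec"
    and len: "length xs = n" "length xs' = n" "length ys = n"
    and eq: "enc xs' (map g ys) = enc xs (map g ys)"
  shows "map2 (jfun ys0 f g) xs' (map g ys) = map2 (jfun ys0 f g) xs (map g ys)"
proof -
  have "map2 f xs' ys' = map2 f xs ys'" if "map g ys' = map g ys" for ys'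
  proof -
    have "length ys' = n"
      using that len by (metis length_map)
    then show ?thesis
      using code len eq that unfolding zero_error_code_def by metis
  qed
  then show ?thesis
    using map2_jfun_eq_iff[of xs' ys xs] len by simp
qed

lemma code_rate_ge_cond_entropy:
  assumes "n \<ge> 1" and code: "zero_error_code f g n enc dec"
  shows "H_jz \<le> code_rate P g n enc"
proof -
  define c where "c = (\<lambda>(xs, ys). enc xs (map g ys))"
  have sep: "j_block \<omega>' = j_block \<omega>"
    if "\<omega> \<in> blocks n" "\<omega>' \<in> blocks n" "z_block \<omega>' = z_block \<omega>" "c \<omega>' = c \<omega>" for \<omega> \<omega>'
  proof -
    obtain xs ys xs' ys' where \<omega>: "\<omega> = (xs, ys)" "\<omega>' = (xs', ys')"
      by (cases \<omega>, cases \<omega>')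
    then have len: "length xs = n" "length ys = n" "length xs' = n" "length ys' = n"
      using that(1,2) by auto
    then have "map g ys' = map g ys"
      using that(3) \<omega> by (simp add: map2_g_eq)
    then show ?thesis
      using zero_error_code_jfun_eq[OF code, of xs xs' ys] that(4) len
      unfolding \<omega> c_def by (simp add: map2_jfun_eq)
  qed
  have "real n * H_jz = (\<Sum>\<omega>\<in>blocks n. block_pmf \<omega> * cond_info block_pmf (blocks n) j_block z_block \<omega>)"
    by (rule expected_cond_info_blocks[symmetric])
  also have "\<dots> \<le> (\<Sum>\<omega>\<in>blocks n. block_pmf \<omega> * length (c \<omega>))"
  proof (rule cond_source_coding_converse)
    have "c (xs, ys) \<in> {enc xs zs | xs zs. length xs = n \<and> length zs = n}" if "(xs, ys) \<in> blocks n" for xs ys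
      using that unfolding c_def by (intro CollectI exI[of _ xs] exI[of _ "map g ys"]) simp
    then have "c ` {\<omega>\<in>blocks n. z_block \<omega> = zs} \<subseteq> {enc xs zs | xs zs. length xs = n \<and> length zs = n}" for zs
      by blast
    then show "prefix_free (c ` {\<omega>\<in>blocks n. z_block \<omega> = zs})" for zs
      using code unfolding zero_error_code_def by (blast intro: prefix_free_subset)
  qed (rule finite_blocks, rule block_pmf_pos, (rule sep; assumption))
  also have "\<dots> = real n * code_rate P g n enc"
    using \<open>n \<ge> 1\<close> unfolding code_rate_def c_def by (simp add: case_prod_unfold)
  finally show ?thesis
    using \<open>n \<ge> 1\<close> by (simp add: mult_le_cancel_left_pos)
qed

definition jvalues :: "nat \<Rightarrow> 'z list \<Rightarrow> 'u list list set" where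
  "jvalues n zs = (\<lambda>xs. map2 (jfun ys0 f g) xs zs) ` {xs. length xs = n}"

definition rank :: "nat \<Rightarrow> 'z list \<Rightarrow> 'u list list \<Rightarrow> nat" where
  "rank n zs = (SOME r. weight_ranking (jvalues n zs)
                  (\<lambda>k. sum block_pmf {\<omega>\<in>blocks n. j_block \<omega> = k \<and> z_block \<omega> = zs}) r)"

text \<open>Ranks are at most \<open>|X|^n < 2^(n |X|)\<close>, so their bit lengths are at most \<open>n |X|\<close> and fit
  into \<open>header_length n\<close> bits.\<close>
definition header_length :: "nat \<Rightarrow> nat" where
  "header_length n = floorlog 2 (n * card (UNIV :: 'x set))"

definition encode :: "nat \<Rightarrow> 'x list \<Rightarrow> 'z list \<Rightarrow> bool list" where
  "encode n xs zs = length_prefixed (header_length n) (rank n zs (map2 (jfun ys0 f g) xs zs))"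

text \<open>Every preimage of the received word has the j-sequence of the true source block, and
  together with \<open>ys\<close> the j-sequence determines the values of \<open>f\<close>.\<close>
definition decode :: "nat \<Rightarrow> 'y list \<Rightarrow> bool list \<Rightarrow> 'u list" where
  "decode n ys w = map2 f (SOME xs. length xs = n \<and> encode n xs (map g ys) = w) ys"

lemma rank_weight_ranking:
  "weight_ranking (jvalues n zs)
     (\<lambda>k. sum block_pmf {\<omega>\<in>blocks n. j_block \<omega> = k \<and> z_block \<omega> = zs}) (rank n zs)"
proof -
  have "\<exists>r. weight_ranking (jvalues n zs)
      (\<lambda>k. sum block_pmf {\<omega>\<in>blocks n. j_block \<omega> = k \<and> z_block \<omega> = zs}) r"
    by (rule ex_weight_ranking) (auto simp: jvalues_def intro: sum_nonneg less_imp_le block_pmf_pos)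
  then show ?thesis
    unfolding rank_def by (rule someI_ex)
qed

lemma floorlog_rank_less:
  assumes "n \<ge> 1" and "length xs = n"
  shows "floorlog 2 (rank n zs (map2 (jfun ys0 f g) xs zs)) < 2 ^ header_length n"
proof -
  define X where "X = card (UNIV :: 'x set)"
  have "map2 (jfun ys0 f g) xs zs \<in> jvalues n zs"
    using assms(2) by (simp add: jvalues_def)
  then have "rank n zs (map2 (jfun ys0 f g) xs zs) \<le> card (jvalues n zs)"
    using rank_weight_ranking[of n zs] unfolding weight_ranking_def by auto
  also have "\<dots> \<le> X ^ n"
    unfolding jvalues_def X_def card_lists_length_UNIV[symmetric] by (rule card_image_le) simp
  also have "\<dots> < (2 ^ X) ^ n"
    using assms(1) by (intro power_strict_mono less_exp) auto
  finally have "floorlog 2 (rank n zs (map2 (jfun ys0 f g) xs zs)) \<le> n * X"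
    by (simp add: floorlog_le_iff power_mult[symmetric] mult.commute)
  also have "n * X < 2 ^ header_length n"
    unfolding header_length_def X_def by (rule less_two_power_floorlog)
  finally show ?thesis .
qed

lemma zero_error_code_encode:
  assumes "n \<ge> 1"
  shows "zero_error_code f g n (encode n) (decode n)"
  unfolding zero_error_code_def
proof (intro conjI allI impI)
  have "{encode n xs zs | xs zs. length xs = n \<and> length zs = n}
      \<subseteq> length_prefixed (header_length n) ` {r. floorlog 2 r < 2 ^ header_length n}"
    using floorlog_rank_less[OF assms] by (auto simp: encode_def)
  then show "prefix_free {encode n xs zs | xs zs. length xs = n \<and> length zs = n}"
    by (rule prefix_free_subset[OF prefix_free_length_prefixed])
  fix xs :: "'x list" and ys :: "'y list"
  assume len: "length xs = n" "length ys = n"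
  define zs where "zs = map g ys"
  define xs' where "xs' = (SOME xs'. length xs' = n \<and> encode n xs' zs = encode n xs zs)"
  have xs': "length xs' = n" "encode n xs' zs = encode n xs zs"
    using someI[of "\<lambda>xs'. length xs' = n \<and> encode n xs' zs = encode n xs zs" xs] len
    unfolding xs'_def by auto
  then have "rank n zs (map2 (jfun ys0 f g) xs' zs) = rank n zs (map2 (jfun ys0 f g) xs zs)"
    using inj_on_length_prefixed floorlog_rank_less[OF assms] len
    unfolding encode_def by (metis (no_types, lifting) inj_onD mem_Collect_eq)
  then have "map2 (jfun ys0 f g) xs' zs = map2 (jfun ys0 f g) xs zs"
    using rank_weight_ranking[of n zs] xs'(1) len(1)
    unfolding weight_ranking_def by (auto simp: jvalues_def dest: inj_onD)
  then have "map2 f xs' ys = map2 f xs ys"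
    using map2_jfun_eq_iff[of xs' ys xs] xs'(1) len unfolding zs_def by auto
  then show "decode n ys (encode n xs (map g ys)) = map2 f xs ys"
    unfolding decode_def xs'_def zs_def .
qed

lemma length_encode_le:
  assumes "(xs, ys) \<in> blocks n"
  shows "length (encode n xs (map g ys))
       \<le> header_length n + 1 + cond_info block_pmf (blocks n) j_block z_block (xs, ys)"
proof -
  define r where "r = rank n (map g ys) (map2 (jfun ys0 f g) xs (map g ys))"
  have len: "length xs = n" "length ys = n"
    using assms by auto
  have "j_block \<omega> \<in> jvalues n (map g ys)" if "\<omega> \<in> blocks n" "z_block \<omega> = z_block (xs, ys)" for \<omega>
  proof -
    obtain xs' ys' where \<omega>: "\<omega> = (xs', ys')"
      by (cases \<omega>)
    then have "length xs' = n" "map g ys' = map g ys"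
      using that len by (auto simp: map2_g_eq)
    then show ?thesis
      unfolding \<omega> jvalues_def by (intro image_eqI[of _ _ xs']) (simp_all add: map2_jfun_eq)
  qed
  then have "j_block ` {\<omega>\<in>blocks n. z_block \<omega> = z_block (xs, ys)} \<subseteq> jvalues n (map g ys)"
    by blast
  then have "log 2 r \<le> cond_info block_pmf (blocks n) j_block z_block (xs, ys)"
    using log_rank_le_cond_info[OF finite_blocks block_pmf_pos assms, of "jvalues n (map g ys)" j_block z_block]
      rank_weight_ranking[of n "map g ys"]
    by (simp add: r_def map2_jfun_eq map2_g_eq len jvalues_def)
  moreover have "r \<ge> 1"
    using rank_weight_ranking[of n "map g ys"] len
    unfolding r_def weight_ranking_def by (auto simp: jvalues_def image_subset_iff)
  ultimately show ?thesis
    using floorlog_le_log[of r] unfolding encode_def r_def by (simp add: length_length_prefixed)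
qed

lemma code_rate_encode_le:
  assumes "n \<ge> 1"
  shows "code_rate P g n (encode n) \<le> H_jz + (header_length n + 1) / n"
proof -
  have "real n * code_rate P g n (encode n)
      = (\<Sum>\<omega>\<in>blocks n. block_pmf \<omega> * length (encode n (fst \<omega>) (map g (snd \<omega>))))"
    using assms unfolding code_rate_def by (simp add: case_prod_unfold)
  also have "\<dots> \<le> (\<Sum>\<omega>\<in>blocks n. block_pmf \<omega> * (header_length n + 1)
                   + block_pmf \<omega> * cond_info block_pmf (blocks n) j_block z_block \<omega>)"
  proof (rule sum_mono)
    fix \<omega> :: "'x list \<times> 'y list" assume "\<omega> \<in> blocks n"
    then have "length (encode n (fst \<omega>) (map g (snd \<omega>)))
        \<le> header_length n + 1 + cond_info block_pmf (blocks n) j_block z_block \<omega>"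
      using length_encode_le[of "fst \<omega>" "snd \<omega>" n] by simp
    then show "block_pmf \<omega> * length (encode n (fst \<omega>) (map g (snd \<omega>)))
        \<le> block_pmf \<omega> * (header_length n + 1) + block_pmf \<omega> * cond_info block_pmf (blocks n) j_block z_block \<omega>"
      using block_pmf_pos[of \<omega>] by (simp add: distrib_left[symmetric] mult_left_mono)
  qed
  also have "\<dots> = header_length n + 1 + real n * H_jz"
    by (simp add: sum.distrib sum_distrib_right[symmetric] sum_block_pmf expected_cond_info_blocks)
  finally show ?thesis
    using assms by (simp add: field_simps)
qed

lemma achievable_rate_cond_entropy: "achievable_rate P f g H_jz"
  unfolding achievable_rate_def
proof (intro exI conjI allI impI)
  show "zero_error_code f g n (encode n) (decode n)" if "n \<ge> 1" for n
    using that by (rule zero_error_code_encode)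
  define C where "C = log 2 (card (UNIV :: 'x set)) + 2"
  have header_le: "(header_length n + 1) / n \<le> (log 2 n + C) / n" if "n \<ge> 1" for n
  proof -
    have card_pos: "card (UNIV :: 'x set) > 0"
      by (simp add: finite_UNIV_card_ge_0)
    then have "header_length n \<le> log 2 (n * card (UNIV :: 'x set)) + 1"
      unfolding header_length_def using that by (intro floorlog_le_log) (simp add: Suc_le_eq)
    also have "log 2 (n * card (UNIV :: 'x set)) = log 2 n + log 2 (card (UNIV :: 'x set))"
      using that card_pos by (simp add: log_mult_pos)
    finally show ?thesis
      using that by (intro divide_right_mono) (auto simp: C_def)
  qed
  show "(\<lambda>n. code_rate P g n (encode n)) \<longlonglongrightarrow> H_jz"
  proof (rule tendsto_sandwich[of "\<lambda>_. H_jz" _ _ "\<lambda>n. H_jz + (log 2 (real n) + C) / real n"])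
    show "\<forall>\<^sub>F n in sequentially. H_jz \<le> code_rate P g n (encode n)"
      using eventually_ge_at_top[of 1] by eventually_elim (use code_rate_ge_cond_entropy zero_error_code_encode in blast)
    show "\<forall>\<^sub>F n in sequentially. code_rate P g n (encode n) \<le> H_jz + (log 2 n + C) / n"
      using eventually_ge_at_top[of 1] by eventually_elim (use code_rate_encode_le header_le in force)
    show "(\<lambda>n. H_jz + (log 2 n + C) / n) \<longlonglongrightarrow> H_jz"
      using tendsto_add[OF tendsto_const LIMSEQ_log_add_const_div_n] by simp
  qed simp
qed

end

theorem theorem3:
  fixes P :: "'x::finite \<Rightarrow> 'y::finite \<Rightarrow> real"
    and f :: "'x \<Rightarrow> 'y \<Rightarrow> 'u::finite"
    and g :: "'y \<Rightarrow> 'z::finite"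
    and ys0 :: "'y list"
  assumes full_support: "\<And>x y. P x y > 0"
    and sum_one: "(\<Sum>x\<in>UNIV. \<Sum>y\<in>UNIV. P x y) = 1"
    and enum: "distinct ys0" "set ys0 = UNIV"
  shows "optimal_rate P f g = cond_entropy P (\<lambda>x y. jfun ys0 f g x (g y)) (\<lambda>x y. g y)"
proof -
  \<comment> \<open>Only the set of \<open>ys0\<close> matters.\<close>
  interpret zero_error_computation P f g ys0
    using full_support sum_one enum(2) by unfold_locales
  show ?thesis
    using achievable_rate_cond_entropy code_rate_ge_cond_entropy by (rule optimal_rate_eqI)
qed

end
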